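(* Let $n\ge1$ and let $T\in\mathcal{L}(\mathcal{H})$ be an $n$-EP operator. Then: (1) if $M$ is a closed subspace of $\mathcal{H}$ reducing $T$, then the restriction $T|_M$ (as an operator on $M$) is $n$-EP; (2) if $S=U^*TU$ for some unitary $U\in\mathcal{L}(\mathcal{H})$, then $S$ is $n$-EP.
   Context: $\mathcal{H}$ is a Hilbert space, $\mathcal{L}(\mathcal{H})$ the bounded operators on it. A closed subspace $M$ reduces $T$ if $T(M)\subset M$ and $T^*(M)\subset M$. For $T$ with closed range, $T^\dagger$ is its Moore–Penrose inverse (unique solution of $TT^\dagger T=T$, $T^\dagger TT^\dagger=T^\dagger$, $(T^\dagger T)^*=T^\dagger T$, $(TT^\dagger)^*=TT^\dagger$). For $n\ge1$, $T$ is $n$-EP if $T$ has closed range and $T^nT^\dagger=T^\dagger T^n$. *)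

theory Defs
  imports "HOL-Analysis.Analysis"
begin

(* An operator "restricted to a closed subspace M"
is handled by relativising every notion to the carrier M; the whole space is M = UNIV. *)

definition reduces :: "'a::real_inner set \<Rightarrow> ('a \<Rightarrow>\<^sub>L 'a) \<Rightarrow> bool" where
  "reduces M T \<longleftrightarrow> closed M \<and> subspace M \<and> T ` M \<subseteq> M \<and>
     (\<forall>Tstar :: 'a \<Rightarrow>\<^sub>L 'a. (\<forall>x y. inner (T x) y = inner x (Tstar y)) \<longrightarrow> Tstar ` M \<subseteq> M)"

definition selfadjoint_on :: "'a::real_inner set \<Rightarrow> ('a \<Rightarrow> 'a) \<Rightarrow> bool" where
  "selfadjoint_on M A \<longleftrightarrow> (\<forall>x\<in>M. \<forall>y\<in>M. inner (A x) y = inner x (A y))"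

definition is_MP_inverse_on :: "'a::real_inner set \<Rightarrow> ('a \<Rightarrow>\<^sub>L 'a) \<Rightarrow> ('a \<Rightarrow>\<^sub>L 'a) \<Rightarrow> bool" where
  "is_MP_inverse_on M T X \<longleftrightarrow> X ` M \<subseteq> M \<and>
     (\<forall>x\<in>M. T (X (T x)) = T x) \<and>
     (\<forall>x\<in>M. X (T (X x)) = X x) \<and>
     selfadjoint_on M (\<lambda>x. X (T x)) \<and>
     selfadjoint_on M (\<lambda>x. T (X x))"

definition n_EP_on :: "nat \<Rightarrow> 'a::real_inner set \<Rightarrow> ('a \<Rightarrow>\<^sub>L 'a) \<Rightarrow> bool" where
  "n_EP_on n M T \<longleftrightarrow> closed (T ` M) \<and>
     (\<exists>X. is_MP_inverse_on M T X \<and>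
        (\<forall>x\<in>M. (blinfun_apply T ^^ n) (X x) = X ((blinfun_apply T ^^ n) x)))"

definition n_EP :: "nat \<Rightarrow> ('a::real_inner \<Rightarrow>\<^sub>L 'a) \<Rightarrow> bool" where
  "n_EP n T \<longleftrightarrow> n_EP_on n UNIV T"

definition unitary_with_adjoint :: "('a::real_inner \<Rightarrow>\<^sub>L 'a) \<Rightarrow> ('a \<Rightarrow>\<^sub>L 'a) \<Rightarrow> bool" where
  "unitary_with_adjoint U Ustar \<longleftrightarrow> (\<forall>x y. inner (U x) y = inner x (Ustar y)) \<and>
     (\<forall>x. Ustar (U x) = x) \<and> (\<forall>x. U (Ustar x) = x)"

end

theory Submission
  imports Defs
begin

(* If M reduces T, the orthogonal projection P onto M commutes with T (this needs the
adjoint of T, hence the Riesz representation theorem), so the reflection R = 2P - I is a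
unitary commuting with T. Conjugating the Moore-Penrose equations by a unitary yields the
Moore-Penrose inverse of the conjugated operator; by uniqueness R T+ R = T+, hence T+ maps M
into M and restricts to the Moore-Penrose inverse of T on M. Part (2) is the same
conjugation with U. *)

lemma closed_convex_nearest_point_exists:
  fixes S :: "'a::{real_inner,complete_space} set"
  assumes "closed S" "convex S" "S \<noteq> {}"
  shows "\<exists>p\<in>S. \<forall>y\<in>S. norm (x - p) \<le> norm (x - y)"
proof -
  define d where "d = (INF y\<in>S. (norm (x - y))\<^sup>2)"
  have bdd: "bdd_below ((\<lambda>y. (norm (x - y))\<^sup>2) ` S)"
    by (auto intro: bdd_belowI[of _ 0])
  have d_le: "d \<le> (norm (x - y))\<^sup>2" if "y \<in> S" for y
    unfolding d_def using bdd that by (rule cINF_lower)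
  have "\<exists>y\<in>S. (norm (x - y))\<^sup>2 < d + 1 / Suc k" for k
  proof -
    have "d < d + 1 / Suc k" by simp
    then show ?thesis using cINF_less_iff[OF \<open>S \<noteq> {}\<close> bdd] unfolding d_def by blast
  qed
  then obtain s where s_in: "\<And>k. s k \<in> S" and s_near: "\<And>k. (norm (x - s k))\<^sup>2 < d + 1 / Suc k"
    by metis
  \<comment> \<open>the parallelogram law applied to x - s i and x - s j, the midpoint lying in S\<close>
  have s_close: "(norm (s i - s j))\<^sup>2 \<le> 2 / Suc i + 2 / Suc j" for i j
  proof -
    have "(1/2) *\<^sub>R s i + (1/2) *\<^sub>R s j \<in> S"
      using s_in \<open>convex S\<close> by (intro convexD) auto
    moreover have "(norm (s i - s j))\<^sup>2 = 2 * (norm (x - s i))\<^sup>2 + 2 * (norm (x - s j))\<^sup>2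
        - 4 * (norm (x - ((1/2) *\<^sub>R s i + (1/2) *\<^sub>R s j)))\<^sup>2"
      by (simp add: power2_norm_eq_inner inner_simps algebra_simps inner_commute)
    ultimately show ?thesis using d_le s_near[of i] s_near[of j] by fastforce
  qed
  have "Cauchy s"
  proof (rule CauchyI)
    fix e :: real assume "0 < e"
    obtain N :: nat where N: "4 / e\<^sup>2 < N" using reals_Archimedean2 by blast
    have small: "2 / Suc m < e\<^sup>2 / 2" if "m \<ge> N" for m
    proof -
      have "4 / e\<^sup>2 < Suc m" using N that by linarith
      then have "4 < Suc m * e\<^sup>2" using \<open>0 < e\<close> by (simp add: field_simps)
      then show ?thesis by (simp add: field_simps)
    qed
    have "norm (s m - s n) < e" if "m \<ge> N" "n \<ge> N" for m n
    proof -
      have "(norm (s m - s n))\<^sup>2 < e\<^sup>2"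
        using s_close[of m n] small[OF that(1)] small[OF that(2)] by linarith
      then show ?thesis using \<open>0 < e\<close> by (simp add: power2_less_imp_less)
    qed
    then show "\<exists>N. \<forall>m\<ge>N. \<forall>n\<ge>N. norm (s m - s n) < e" by blast
  qed
  then obtain p where lim: "s \<longlonglongrightarrow> p" using Cauchy_convergent_iff convergent_def by blast
  have "p \<in> S" using closed_sequentially[OF \<open>closed S\<close>] s_in lim by blast
  have "(\<lambda>k. (norm (x - s k))\<^sup>2) \<longlonglongrightarrow> (norm (x - p))\<^sup>2" by (intro tendsto_intros lim)
  moreover have "(\<lambda>k. d + 1 / real (Suc k)) \<longlonglongrightarrow> d"
    using tendsto_add[OF tendsto_const LIMSEQ_inverse_real_of_nat] by (simp add: inverse_eq_divide)
  ultimately have p_min: "(norm (x - p))\<^sup>2 \<le> d"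
    by (rule LIMSEQ_le) (use s_near in \<open>auto intro: less_imp_le\<close>)
  have "norm (x - p) \<le> norm (x - y)" if "y \<in> S" for y
  proof (rule power2_le_imp_le)
    show "(norm (x - p))\<^sup>2 \<le> (norm (x - y))\<^sup>2" using d_le[OF that] p_min by linarith
  qed simp
  with \<open>p \<in> S\<close> show ?thesis by blast
qed

lemma nearest_point_subspace_orthogonal:
  assumes "subspace M" "p \<in> M" and nearest: "\<forall>y\<in>M. norm (x - p) \<le> norm (x - y)"
    and "m \<in> M"
  shows "inner (x - p) m = 0"
proof (cases "m = 0")
  case False
  define c where "c = inner (x - p) m"
  define t where "t = c / inner m m"
  have "inner m m > 0" using False by simp
  have "p + t *\<^sub>R m \<in> M" using assms by (simp add: subspace_add subspace_scale)
  then have "(norm (x - p))\<^sup>2 \<le> (norm (x - (p + t *\<^sub>R m)))\<^sup>2"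
    using nearest by (simp add: power_mono)
  also have "\<dots> = (norm (x - p))\<^sup>2 - 2 * t * c + t\<^sup>2 * inner m m"
    unfolding c_def power2_norm_eq_inner
    by (simp add: inner_simps algebra_simps inner_commute power2_eq_square)
  also have "\<dots> = (norm (x - p))\<^sup>2 - c\<^sup>2 / inner m m"
    using \<open>inner m m > 0\<close> unfolding t_def by (simp add: field_simps power2_eq_square)
  finally have "c\<^sup>2 \<le> 0" using \<open>inner m m > 0\<close> by (simp add: divide_le_0_iff)
  then show ?thesis unfolding c_def by simp
qed simp

definition orthogonal_projection :: "'a::real_inner set \<Rightarrow> 'a \<Rightarrow> 'a" where
  "orthogonal_projection M x = (SOME p. p \<in> M \<and> (\<forall>m\<in>M. inner (x - p) m = 0))"

definition orthogonal_reflection :: "'a::real_inner set \<Rightarrow> 'a \<Rightarrow>\<^sub>L 'a" where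
  "orthogonal_reflection M = Blinfun (\<lambda>x. 2 *\<^sub>R orthogonal_projection M x - x)"

context
  fixes M :: "'a::{real_inner,complete_space} set"
  assumes closed: "closed M" and subspace: "subspace M"
begin

lemma orthogonal_projection_in_and_orthogonal:
  "orthogonal_projection M x \<in> M \<and> (\<forall>m\<in>M. inner (x - orthogonal_projection M x) m = 0)"
proof -
  obtain p where "p \<in> M" "\<forall>y\<in>M. norm (x - p) \<le> norm (x - y)"
    using closed_convex_nearest_point_exists[OF closed subspace_imp_convex[OF subspace]]
      subspace_0[OF subspace] by blast
  then have "p \<in> M \<and> (\<forall>m\<in>M. inner (x - p) m = 0)"
    using nearest_point_subspace_orthogonal[OF subspace] by blast
  then show ?thesis unfolding orthogonal_projection_def by (rule someI)
qed

lemma orthogonal_projection_in: "orthogonal_projection M x \<in> M"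
  using orthogonal_projection_in_and_orthogonal by blast

lemma orthogonal_projection_orthogonal: "m \<in> M \<Longrightarrow> inner (x - orthogonal_projection M x) m = 0"
  using orthogonal_projection_in_and_orthogonal by blast

lemma orthogonal_projection_eqI:
  assumes "p \<in> M" "\<And>m. m \<in> M \<Longrightarrow> inner (x - p) m = 0"
  shows "orthogonal_projection M x = p"
proof -
  let ?q = "orthogonal_projection M x"
  have "?q - p \<in> M" using assms orthogonal_projection_in subspace by (simp add: subspace_diff)
  then have "inner (?q - p) (?q - p) = inner (x - p) (?q - p) - inner (x - ?q) (?q - p)"
    by (simp add: inner_simps)
  also have "\<dots> = 0" using assms orthogonal_projection_orthogonal \<open>?q - p \<in> M\<close> by simp
  finally show ?thesis by simp
qed

lemma orthogonal_projection_id: "m \<in> M \<Longrightarrow> orthogonal_projection M m = m"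
  by (rule orthogonal_projection_eqI) simp_all

lemma orthogonal_projection_self_adjoint:
  "inner (orthogonal_projection M x) y = inner x (orthogonal_projection M y)"
proof -
  have "inner (orthogonal_projection M x) (y - orthogonal_projection M y) = 0"
    using orthogonal_projection_orthogonal[OF orthogonal_projection_in] by (simp add: inner_commute)
  moreover have "inner (x - orthogonal_projection M x) (orthogonal_projection M y) = 0"
    using orthogonal_projection_orthogonal[OF orthogonal_projection_in] by simp
  ultimately show ?thesis by (simp add: inner_simps)
qed

lemma bounded_linear_orthogonal_projection: "bounded_linear (orthogonal_projection M)"
proof (rule bounded_linear_intro)
  show "orthogonal_projection M (x + y) = orthogonal_projection M x + orthogonal_projection M y" for x y
  proof (rule orthogonal_projection_eqI)
    show "orthogonal_projection M x + orthogonal_projection M y \<in> M"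
      using subspace by (simp add: subspace_add orthogonal_projection_in)
    show "inner (x + y - (orthogonal_projection M x + orthogonal_projection M y)) m = 0" if "m \<in> M" for m
      using orthogonal_projection_orthogonal[OF that, of x] orthogonal_projection_orthogonal[OF that, of y]
      by (simp add: inner_diff_left inner_add_left)
  qed
  show "orthogonal_projection M (r *\<^sub>R x) = r *\<^sub>R orthogonal_projection M x" for r x
  proof (rule orthogonal_projection_eqI)
    show "r *\<^sub>R orthogonal_projection M x \<in> M"
      using subspace by (simp add: subspace_scale orthogonal_projection_in)
    show "inner (r *\<^sub>R x - r *\<^sub>R orthogonal_projection M x) m = 0" if "m \<in> M" for m
      using orthogonal_projection_orthogonal[OF that, of x]
      by (simp add: inner_diff_left flip: scaleR_diff_right)
  qed
  show "norm (orthogonal_projection M x) \<le> norm x * 1" for x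
  proof -
    have "(norm (orthogonal_projection M x))\<^sup>2 = inner x (orthogonal_projection M x)"
      by (metis power2_norm_eq_inner orthogonal_projection_self_adjoint orthogonal_projection_id orthogonal_projection_in)
    also have "\<dots> \<le> norm x * norm (orthogonal_projection M x)" by (rule norm_cauchy_schwarz)
    finally show ?thesis
      by (cases "orthogonal_projection M x = 0") (auto simp: power2_eq_square)
  qed
qed

lemma orthogonal_reflection_apply:
  "orthogonal_reflection M x = 2 *\<^sub>R orthogonal_projection M x - x"
proof -
  have "bounded_linear (\<lambda>x. 2 *\<^sub>R orthogonal_projection M x - x)"
    by (intro bounded_linear_sub bounded_linear_const_scaleR
        bounded_linear_orthogonal_projection bounded_linear_ident)
  then show ?thesis unfolding orthogonal_reflection_def by (simp add: bounded_linear_Blinfun_apply)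
qed

lemma orthogonal_reflection_fixed_iff: "orthogonal_reflection M x = x \<longleftrightarrow> x \<in> M"
proof
  assume "orthogonal_reflection M x = x"
  then have "2 *\<^sub>R orthogonal_projection M x = 2 *\<^sub>R x"
    by (simp add: orthogonal_reflection_apply scaleR_2 diff_eq_eq)
  then have "x = orthogonal_projection M x" by simp
  then show "x \<in> M" by (metis orthogonal_projection_in)
qed (simp add: orthogonal_reflection_apply orthogonal_projection_id scaleR_2)

lemma unitary_orthogonal_reflection:
  "unitary_with_adjoint (orthogonal_reflection M) (orthogonal_reflection M)"
proof -
  have "orthogonal_projection M (orthogonal_reflection M x) = orthogonal_projection M x" for x
  proof -
    interpret P: bounded_linear "orthogonal_projection M"
      by (rule bounded_linear_orthogonal_projection)
    show ?thesis
      by (simp add: orthogonal_reflection_apply P.diff P.add P.scaleR scaleR_2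
          orthogonal_projection_id orthogonal_projection_in)
  qed
  then show ?thesis
    unfolding unitary_with_adjoint_def
    by (simp add: orthogonal_reflection_apply inner_simps
        orthogonal_projection_self_adjoint scaleR_2)
qed

end

lemma Riesz_representation:
  fixes f :: "'a::{real_inner,complete_space} \<Rightarrow> real"
  assumes "bounded_linear f"
  shows "\<exists>z. \<forall>x. f x = inner z x"
proof (cases "\<forall>x. f x = 0")
  case False
  interpret f: bounded_linear f by fact
  define K where "K = f -` {0}"
  have K: "closed K" "subspace K" unfolding K_def
    by (intro closed_vimage closed_singleton linear_continuous_on \<open>bounded_linear f\<close>)
      (simp add: subspace_def f.add f.scale f.zero)
  obtain v where "f v \<noteq> 0" using False by blast
  define w where "w = v - orthogonal_projection K v"
  have w_orth: "inner w m = 0" if "m \<in> K" for m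
    unfolding w_def using orthogonal_projection_orthogonal[OF K that] .
  have "f w = f v"
    using orthogonal_projection_in[OF K, of v] by (simp add: w_def K_def f.diff)
  have "f w \<noteq> 0" "inner w w \<noteq> 0" using \<open>f v \<noteq> 0\<close> \<open>f w = f v\<close> by auto
  have "f x = inner ((f w / inner w w) *\<^sub>R w) x" for x
  proof -
    have "x - (f x / f w) *\<^sub>R w \<in> K" unfolding K_def using \<open>f w \<noteq> 0\<close> by (simp add: f.diff f.scale)
    then have "inner w (x - (f x / f w) *\<^sub>R w) = 0" by (rule w_orth)
    then have "inner w x = f x / f w * inner w w" by (simp add: inner_simps)
    then show ?thesis using \<open>f w \<noteq> 0\<close> \<open>inner w w \<noteq> 0\<close> by (simp add: field_simps)
  qed
  then show ?thesis by blast
qed auto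

lemma adjoint_exists:
  fixes T :: "'a::{real_inner,complete_space} \<Rightarrow>\<^sub>L 'a"
  shows "\<exists>T'::'a \<Rightarrow>\<^sub>L 'a. \<forall>x y. inner (T x) y = inner x (T' y)"
proof -
  have "\<exists>z. \<forall>x. inner (T x) y = inner x z" for y
  proof -
    have "bounded_linear (\<lambda>x. inner (T x) y)"
      by (intro bounded_linear_compose[OF bounded_linear_inner_left] blinfun.bounded_linear_right)
    then show ?thesis by (metis Riesz_representation inner_commute)
  qed
  then obtain g where g: "\<And>x y. inner (T x) y = inner x (g y)" by metis
  have "bounded_linear g"
  proof (rule bounded_linear_intro)
    show "g (a + b) = g a + g b" for a b
      by (rule vector_eq_ldot[THEN iffD1]) (simp add: inner_add_right flip: g)
    show "g (r *\<^sub>R a) = r *\<^sub>R g a" for r a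
      by (rule vector_eq_ldot[THEN iffD1]) (simp flip: g)
    show "norm (g y) \<le> norm y * norm T" for y
    proof -
      have "(norm (g y))\<^sup>2 = inner (T (g y)) y" by (simp add: g power2_norm_eq_inner)
      also have "\<dots> \<le> norm (T (g y)) * norm y" by (rule norm_cauchy_schwarz)
      also have "\<dots> \<le> norm T * norm (g y) * norm y" by (simp add: mult_right_mono norm_blinfun)
      finally show ?thesis by (cases "g y = 0") (auto simp: power2_eq_square algebra_simps)
    qed
  qed
  then show ?thesis using g by (intro exI[of _ "Blinfun g"]) (simp add: bounded_linear_Blinfun_apply)
qed

lemma unitary_with_adjointD:
  assumes "unitary_with_adjoint U U'"
  shows "U' (U x) = x" "U (U' x) = x"
    "inner (U x) y = inner x (U' y)" "inner (U' x) y = inner x (U y)"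
  using assms unfolding unitary_with_adjoint_def by (auto simp: inner_commute)

lemma MP_inverse_unique:
  fixes T X Y :: "'a::real_inner \<Rightarrow>\<^sub>L 'a"
  assumes "is_MP_inverse_on UNIV T X" "is_MP_inverse_on UNIV T Y"
  shows "X = Y"
proof -
  have X1: "T (X (T x)) = T x" and X2: "X (T (X x)) = X x"
    and X3: "inner (X (T x)) y = inner x (X (T y))" and X4: "inner (T (X x)) y = inner x (T (X y))"
    and Y1: "T (Y (T x)) = T x" and Y2: "Y (T (Y x)) = Y x"
    and Y3: "inner (Y (T x)) y = inner x (Y (T y))" and Y4: "inner (T (Y x)) y = inner x (T (Y y))"
    for x y using assms unfolding is_MP_inverse_on_def selfadjoint_on_def by auto
  have XT: "X (T x) = Y (T x)" for x
  proof (rule vector_eq_rdot[THEN iffD1, rule_format])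
    fix y
    have "inner (X (T x)) y = inner (X (T (Y (T x)))) y" by (simp add: Y1)
    also have "\<dots> = inner (Y (T x)) (X (T y))" by (simp add: X3)
    also have "\<dots> = inner x (Y (T (X (T y))))" by (simp add: Y3)
    also have "\<dots> = inner (Y (T x)) y" by (simp add: X1 Y3)
    finally show "inner (X (T x)) y = inner (Y (T x)) y" .
  qed
  have TX: "T (X x) = T (Y x)" for x
  proof (rule vector_eq_rdot[THEN iffD1, rule_format])
    fix y
    have "inner (T (X x)) y = inner (T (Y (T (X x)))) y" by (simp add: Y1)
    also have "\<dots> = inner (T (X x)) (T (Y y))" by (simp add: Y4)
    also have "\<dots> = inner x (T (X (T (Y y))))" by (simp add: X4)
    also have "\<dots> = inner (T (Y x)) y" by (simp add: X1 Y4)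
    finally show "inner (T (X x)) y = inner (T (Y x)) y" .
  qed
  show ?thesis
  proof (rule blinfun_eqI)
    fix x
    have "X x = X (T (X x))" by (simp add: X2)
    also have "\<dots> = Y (T (Y x))" by (simp add: TX XT)
    also have "\<dots> = Y x" by (simp add: Y2)
    finally show "X x = Y x" .
  qed
qed

lemma MP_inverse_unitary_conj:
  fixes T X :: "'a::real_inner \<Rightarrow>\<^sub>L 'a"
  assumes "is_MP_inverse_on UNIV T X" and U: "unitary_with_adjoint U U'"
  shows "is_MP_inverse_on UNIV (U' o\<^sub>L T o\<^sub>L U) (U' o\<^sub>L X o\<^sub>L U)"
  using assms unitary_with_adjointD[OF U]
  unfolding is_MP_inverse_on_def selfadjoint_on_def by simp

lemma MP_inverse_commute_unitary:
  fixes T X :: "'a::real_inner \<Rightarrow>\<^sub>L 'a"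
  assumes X: "is_MP_inverse_on UNIV T X" and U: "unitary_with_adjoint U U'"
    and commute: "U o\<^sub>L T = T o\<^sub>L U"
  shows "U o\<^sub>L X = X o\<^sub>L U"
proof -
  have "U' o\<^sub>L T o\<^sub>L U = T"
    by (rule blinfun_eqI) (metis unitary_with_adjointD(1)[OF U] commute blinfun_apply_blinfun_compose)
  then have "U' o\<^sub>L X o\<^sub>L U = X" using MP_inverse_unique MP_inverse_unitary_conj[OF X U] X by metis
  then show ?thesis by (metis unitary_with_adjointD(2)[OF U] blinfun_eqI blinfun_apply_blinfun_compose)
qed

lemma reduces_orthogonal_projection_commute:
  fixes T :: "'a::{real_inner,complete_space} \<Rightarrow>\<^sub>L 'a"
  assumes "reduces M T"
  shows "orthogonal_projection M (T x) = T (orthogonal_projection M x)"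
proof -
  obtain T' :: "'a \<Rightarrow>\<^sub>L 'a" where T': "\<And>x y. inner (T x) y = inner x (T' y)"
    using adjoint_exists by blast
  have M: "closed M" "subspace M" and "T ` M \<subseteq> M" "T' ` M \<subseteq> M"
    using assms T' unfolding reduces_def by blast+
  show ?thesis
  proof (rule orthogonal_projection_eqI[OF M])
    show "T (orthogonal_projection M x) \<in> M"
      using \<open>T ` M \<subseteq> M\<close> orthogonal_projection_in[OF M] by blast
    show "inner (T x - T (orthogonal_projection M x)) m = 0" if "m \<in> M" for m
      using orthogonal_projection_orthogonal[OF M, of "T' m" x] \<open>T' ` M \<subseteq> M\<close> that
      by (simp add: T' image_subset_iff flip: blinfun.diff_right)
  qed
qed

lemma n_EP_on_reducing_subspace:
  fixes T :: "'a::{real_inner,complete_space} \<Rightarrow>\<^sub>L 'a"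
  assumes "n_EP n T" and reduces: "reduces M T"
  shows "n_EP_on n M T"
proof -
  obtain X where "closed (range T)" and X: "is_MP_inverse_on UNIV T X"
    and commute: "\<And>x. (blinfun_apply T ^^ n) (X x) = X ((blinfun_apply T ^^ n) x)"
    using \<open>n_EP n T\<close> unfolding n_EP_def n_EP_on_def by blast
  have M: "closed M" "subspace M" and "T ` M \<subseteq> M"
    using reduces unfolding reduces_def by blast+
  let ?R = "orthogonal_reflection M"
  have "?R o\<^sub>L T = T o\<^sub>L ?R"
    by (rule blinfun_eqI) (simp add: orthogonal_reflection_apply[OF M] blinfun.diff_right
        blinfun.scaleR_right reduces_orthogonal_projection_commute[OF reduces])
  then have RX: "?R o\<^sub>L X = X o\<^sub>L ?R"
    by (rule MP_inverse_commute_unitary[OF X unitary_orthogonal_reflection[OF M]])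
  have "X ` M \<subseteq> M"
  proof (rule image_subsetI)
    fix y assume "y \<in> M"
    have "?R (X y) = X (?R y)" by (metis RX blinfun_apply_blinfun_compose)
    also have "?R y = y" using \<open>y \<in> M\<close> orthogonal_reflection_fixed_iff[OF M] by blast
    finally show "X y \<in> M" using orthogonal_reflection_fixed_iff[OF M] by simp
  qed
  have "T ` M = range T \<inter> M"
  proof
    show "range T \<inter> M \<subseteq> T ` M"
    proof
      fix y assume "y \<in> range T \<inter> M"
      then obtain x where "y = T x" "y \<in> M" by blast
      then have "y = T (orthogonal_projection M x)"
        by (metis orthogonal_projection_id[OF M] reduces_orthogonal_projection_commute[OF reduces])
      then show "y \<in> T ` M" using orthogonal_projection_in[OF M] by blast
    qed
  qed (use \<open>T ` M \<subseteq> M\<close> in blast)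
  then have "closed (T ` M)" using \<open>closed (range T)\<close> \<open>closed M\<close> by (simp add: closed_Int)
  with X \<open>X ` M \<subseteq> M\<close> commute show ?thesis
    unfolding n_EP_on_def is_MP_inverse_on_def selfadjoint_on_def by (intro conjI exI[of _ X]) auto
qed

lemma funpow_unitary_conj:
  assumes "unitary_with_adjoint U U'"
  shows "(blinfun_apply (U' o\<^sub>L T o\<^sub>L U) ^^ k) x = U' ((blinfun_apply T ^^ k) (U x))"
  by (induction k) (simp_all add: unitary_with_adjointD[OF assms])

lemma n_EP_unitary_conj:
  fixes T :: "'a::real_inner \<Rightarrow>\<^sub>L 'a"
  assumes "n_EP n T" and U: "unitary_with_adjoint U U'"
  shows "n_EP n (U' o\<^sub>L T o\<^sub>L U)"
proof -
  obtain X where "closed (range T)" and X: "is_MP_inverse_on UNIV T X"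
    and commute: "\<And>x. (blinfun_apply T ^^ n) (X x) = X ((blinfun_apply T ^^ n) x)"
    using \<open>n_EP n T\<close> unfolding n_EP_def n_EP_on_def by blast
  have "range (U' o\<^sub>L T o\<^sub>L U) = U -` range T"
  proof
    show "range (U' o\<^sub>L T o\<^sub>L U) \<subseteq> U -` range T" by (auto simp: unitary_with_adjointD[OF U])
    show "U -` range T \<subseteq> range (U' o\<^sub>L T o\<^sub>L U)"
    proof
      fix x assume "x \<in> U -` range T"
      then obtain z where "U x = T z" by auto
      then have "x = (U' o\<^sub>L T o\<^sub>L U) (U' z)" by (simp add: unitary_with_adjointD[OF U] flip: \<open>U x = T z\<close>)
      then show "x \<in> range (U' o\<^sub>L T o\<^sub>L U)" by blast
    qed
  qed
  then have "closed (range (U' o\<^sub>L T o\<^sub>L U))"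
    by (simp add: closed_vimage \<open>closed (range T)\<close> linear_continuous_on blinfun.bounded_linear_right)
  moreover have "(blinfun_apply (U' o\<^sub>L T o\<^sub>L U) ^^ n) ((U' o\<^sub>L X o\<^sub>L U) x)
      = (U' o\<^sub>L X o\<^sub>L U) ((blinfun_apply (U' o\<^sub>L T o\<^sub>L U) ^^ n) x)" for x
    by (simp add: funpow_unitary_conj[OF U] unitary_with_adjointD[OF U] commute)
  ultimately show ?thesis
    using MP_inverse_unitary_conj[OF X U] unfolding n_EP_def n_EP_on_def by blast
qed

theorem mainTheorem7:
  fixes T :: "'a::{real_inner, complete_space} \<Rightarrow>\<^sub>L 'a" and n :: nat
  assumes "n \<ge> 1" and "n_EP n T"
  shows "(\<forall>M. reduces M T \<longrightarrow> n_EP_on n M T) \<and>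
         (\<forall>U Ustar S. unitary_with_adjoint U Ustar \<and> S = Ustar o\<^sub>L T o\<^sub>L U \<longrightarrow> n_EP n S)"
  using n_EP_on_reducing_subspace[OF \<open>n_EP n T\<close>] n_EP_unitary_conj[OF \<open>n_EP n T\<close>] by blast

end
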